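(* Let $C$ be a cycle on vertices $0,1,\dots,n-1$ (in clockwise order), let $\mathcal H$ be a family of at least three pairwise distinct runs of $C$ that is strict-containment free, and let $\mathcal K$ be a family of vertex subsets of $C$ such that $(C,\mathcal H)$ and $(C,\mathcal K)$ are $axax$-free. Let $C(\mathcal H)$ be the cycle on $\mathcal H$ in lex. cyclic order. Then there is an outerplanar graph $Q$ on vertex set $\mathcal H$ that contains $C(\mathcal H)$, has an outerplanar embedding whose outer face is bounded by $C(\mathcal H)$, and such that for every $K\in\mathcal K$ the set $\{H\in\mathcal H: H\cap K\ne\emptyset\}$ induces a connected subgraph of $Q$.
   Context: Indices are taken mod $n$. A run is a vertex set of the form $\mathrm{arc}[i,j]=\{i,i+1,\dots,j\}$ (consecutive vertices in clockwise order) that is a nonempty proper subset of $V(C)$; for such a run $R$ write $s(R)=i$, $t(R)=j$. A run $R$ is strictly contained in a run $R'$ if $R\subseteq R'$ and, traversing $C$ clockwise starting from $s(R')$, one meets $s(R')$ strictly before $s(R)$ and $t(R)$ strictly before $t(R')$ (i.e. $R'$ extends beyond $R$ at both ends). A family of runs is strict-containment free if no member is strictly contained in another. Lex. cyclic order: traverse $C$ clockwise from some fixed starting vertex; on visiting a vertex $v$, list all $R\in\mathcal H$ with $s(R)=v$, ordered by increasing clockwise distance from $v$ to $t(R)$ (ties broken arbitrarily); $C(\mathcal H)$ is the cycle through the members of $\mathcal H$ in this order. "Vertices $p_1,\dots,p_4$ in cyclic order" means four distinct vertices met in this order when traversing $C$. A pair $H,H'$ of a family is an $axax$-pair if there are vertices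 $a_1,x_1,a_2,x_2$ in cyclic order with $a_1,a_2\in H\setminus H'$ and $x_1,x_2\in H'$; a family is $axax$-free if it has no $axax$-pair. *)

theory Defs
  imports Main
begin

text \<open>The cycle C has vertices 0,...,n-1 in clockwise order; successor of v is (v+1) mod n.\<close>

definition cdist :: "nat \<Rightarrow> nat \<Rightarrow> nat \<Rightarrow> nat" where
  "cdist n a b = (b + n - a) mod n"

definition arc :: "nat \<Rightarrow> nat \<Rightarrow> nat \<Rightarrow> nat set" where
  "arc n i j = {v. v < n \<and> cdist n i v \<le> cdist n i j}"

definition is_run :: "nat \<Rightarrow> nat set \<Rightarrow> bool" where
  "is_run n R \<longleftrightarrow> (\<exists>i<n. \<exists>j<n. R = arc n i j) \<and> R \<noteq> {} \<and> R \<noteq> {0..<n}"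

definition run_s :: "nat \<Rightarrow> nat set \<Rightarrow> nat" where
  "run_s n R = (THE i. i < n \<and> (\<exists>j<n. R = arc n i j))"

definition run_t :: "nat \<Rightarrow> nat set \<Rightarrow> nat" where
  "run_t n R = (THE j. j < n \<and> (\<exists>i<n. R = arc n i j))"

definition strictly_contained :: "nat \<Rightarrow> nat set \<Rightarrow> nat set \<Rightarrow> bool" where
  "strictly_contained n R R' \<longleftrightarrow> R \<subseteq> R' \<and>
     0 < cdist n (run_s n R') (run_s n R) \<and>
     cdist n (run_s n R') (run_t n R) < cdist n (run_s n R') (run_t n R')"

definition strict_containment_free :: "nat \<Rightarrow> nat set set \<Rightarrow> bool" where
  "strict_containment_free n F \<longleftrightarrow>
     (\<forall>R\<in>F. \<forall>R'\<in>F. \<not> strictly_contained n R R')"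

definition in_cyclic_order :: "nat \<Rightarrow> nat \<Rightarrow> nat \<Rightarrow> nat \<Rightarrow> nat \<Rightarrow> bool" where
  "in_cyclic_order n p1 p2 p3 p4 \<longleftrightarrow> p1 < n \<and> p2 < n \<and> p3 < n \<and> p4 < n \<and>
     0 < cdist n p1 p2 \<and> cdist n p1 p2 < cdist n p1 p3 \<and> cdist n p1 p3 < cdist n p1 p4"

definition axax_pair :: "nat \<Rightarrow> nat set \<Rightarrow> nat set \<Rightarrow> bool" where
  "axax_pair n H H' \<longleftrightarrow> (\<exists>a1 x1 a2 x2. in_cyclic_order n a1 x1 a2 x2 \<and>
     a1 \<in> H - H' \<and> a2 \<in> H - H' \<and> x1 \<in> H' \<and> x2 \<in> H')"

definition axax_free :: "nat \<Rightarrow> nat set set \<Rightarrow> bool" where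
  "axax_free n F \<longleftrightarrow> (\<forall>H\<in>F. \<forall>H'\<in>F. \<not> axax_pair n H H')"

text \<open>Lex. cyclic order, traversing C clockwise from the fixed starting vertex 0:
  R comes before R' iff s(R) < s(R'), or s(R) = s(R') and R ends earlier.\<close>
definition lex_less :: "nat \<Rightarrow> nat set \<Rightarrow> nat set \<Rightarrow> bool" where
  "lex_less n A B \<longleftrightarrow> run_s n A < run_s n B \<or>
     (run_s n A = run_s n B \<and>
      cdist n (run_s n A) (run_t n A) < cdist n (run_s n B) (run_t n B))"

text \<open>Edge set of the cycle C(H): consecutive members in the lex. order, plus the closing edge
  between the last and the first member.\<close>
definition lex_cycle_edges :: "nat \<Rightarrow> nat set set \<Rightarrow> nat set set set" where
  "lex_cycle_edges n H = {{A, B} | A B. A \<in> H \<and> B \<in> H \<and> lex_less n A B \<and>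
      ((\<not> (\<exists>X\<in>H. lex_less n A X \<and> lex_less n X B)) \<or>
       (\<forall>X\<in>H. \<not> lex_less n X A \<and> \<not> lex_less n B X))}"

text \<open>Two edges cross (as chords of the cycle C(H)) iff their endpoints alternate
  in the cyclic order of C(H).\<close>
definition edges_cross :: "nat \<Rightarrow> nat set set \<Rightarrow> nat set set \<Rightarrow> bool" where
  "edges_cross n e f \<longleftrightarrow> (\<exists>A B C D. e = {A, B} \<and> f = {C, D} \<and>
     lex_less n A C \<and> lex_less n C B \<and> lex_less n B D)"

definition simple_graph_on :: "'a set \<Rightarrow> 'a set set \<Rightarrow> bool" where
  "simple_graph_on V E \<longleftrightarrow> (\<forall>e\<in>E. \<exists>u v. u \<in> V \<and> v \<in> V \<and> u \<noteq> v \<and> e = {u, v})"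

definition induces_connected :: "'a set set \<Rightarrow> 'a set \<Rightarrow> bool" where
  "induces_connected E S \<longleftrightarrow>
     (\<forall>u\<in>S. \<forall>v\<in>S. (\<lambda>x y. x \<in> S \<and> y \<in> S \<and> {x, y} \<in> E)\<^sup>*\<^sup>* u v)"

end

theory Submission
  imports Defs
begin

text \<open>The hit sets \<open>{H \<in> \<H>. H \<inter> K \<noteq> {}}\<close>, \<open>K \<in> \<K>\<close>, are axax-free for the cyclic lex. order
  of \<open>\<H>\<close>. Indeed, unrolling \<open>C\<close> to the integers turns each run \<open>R\<close> into an interval starting at
  \<open>s(R)\<close>, and strict-containment freeness forces every point of a run \<open>X\<close> outside a lex-later
  run \<open>Y\<close> to lie before the start of \<open>Y\<close>; so an alternation of two hit sets in \<open>\<H>\<close> yields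
  an alternation of points of the two sets of \<open>\<K>\<close> on \<open>C\<close>.

  In an axax-free family on a cycle some vertex \<open>v\<close> is never isolated: each member containing
  \<open>v\<close>, other than \<open>{v}\<close>, contains a cycle neighbour of \<open>v\<close>. Otherwise take an isolated vertex
  whose distance to the next point of its set is minimal; its successor is isolated as well, and
  the two sets form an axax-pair. Delete \<open>v\<close>, build the graph on the remaining vertices
  recursively and add all edges of the cycle: these cross no chord, and they attach \<open>v\<close> to every
  set containing it.\<close>

section \<open>Clockwise distance\<close>

lemma cdist_eq_if:
  assumes "a < n" "b < n"
  shows "cdist n a b = (if a \<le> b then b - a else b + n - a)"
  using assms by (auto simp: cdist_def mod_if)

lemma cdist_less: "a < n \<Longrightarrow> b < n \<Longrightarrow> cdist n a b < n"
  by (simp add: cdist_def)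

lemma cdist_inj: "a < n \<Longrightarrow> x < n \<Longrightarrow> y < n \<Longrightarrow> cdist n a x = cdist n a y \<Longrightarrow> x = y"
  by (auto simp: cdist_eq_if split: if_splits)

lemma add_cdist_mod: "a < n \<Longrightarrow> b < n \<Longrightarrow> (a + cdist n a b) mod n = b"
  by (auto simp: cdist_eq_if)

lemma cdist_self [simp]: "cdist n a a = 0"
  by (simp add: cdist_def)

lemma cdist_mod_mod:
  assumes "u \<le> w" "w < u + n"
  shows "cdist n (u mod n) (w mod n) = w - u"
proof -
  define a d where "a = u mod n" and "d = w - u"
  have "a < n" "d < n" using assms by (auto simp: a_def d_def)
  have "w = u + d" using assms(1) by (simp add: d_def)
  then have "w mod n = (a + d) mod n" by (simp add: a_def mod_add_left_eq)
  then show ?thesis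
    using \<open>a < n\<close> \<open>d < n\<close> by (fold a_def d_def) (auto simp: cdist_eq_if mod_if)
qed

lemma cdist_pred_mod:
  "a < n \<Longrightarrow> x < n \<Longrightarrow> x \<noteq> a \<Longrightarrow> cdist n a ((x + n - 1) mod n) = cdist n a x - 1"
  by (auto simp: cdist_eq_if mod_if)

lemma cdist_pred_mod_self: "1 < n \<Longrightarrow> a < n \<Longrightarrow> cdist n a ((a + n - 1) mod n) = n - 1"
  by (auto simp: cdist_eq_if mod_if)

lemma cdist_Suc_mod:
  "a < n \<Longrightarrow> x < n \<Longrightarrow> cdist n a x < n - 1 \<Longrightarrow> cdist n a (Suc x mod n) = Suc (cdist n a x)"
  by (auto simp: cdist_eq_if mod_if)

lemma in_cyclic_order_mod:
  assumes "u1 < u2" "u2 < u3" "u3 < u4" "u4 < u1 + n"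
  shows "in_cyclic_order n (u1 mod n) (u2 mod n) (u3 mod n) (u4 mod n)"
  using assms cdist_mod_mod[of u1 u2 n] cdist_mod_mod[of u1 u3 n] cdist_mod_mod[of u1 u4 n]
  by (simp add: in_cyclic_order_def, arith)

lemma in_cyclic_order_cases:
  assumes "in_cyclic_order n p1 p2 p3 p4"
  shows "p1 < p2 \<and> p2 < p3 \<and> p3 < p4 \<or> p2 < p3 \<and> p3 < p4 \<and> p4 < p1 \<or>
         p3 < p4 \<and> p4 < p1 \<and> p1 < p2 \<or> p4 < p1 \<and> p1 < p2 \<and> p2 < p3"
  using assms by (auto simp: in_cyclic_order_def cdist_eq_if split: if_splits)

section \<open>Axax-free families on a cycle\<close>

lemma Suc_mod_neq:
  assumes "k < m" "2 \<le> m"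
  shows "Suc k mod m \<noteq> k"
proof (cases "Suc k < m")
  case False
  with assms have "Suc k = m" "k \<noteq> 0" by linarith+
  then show ?thesis by simp
qed simp

lemma pred_Suc_mod:
  assumes "i < m"
  shows "(Suc i mod m + m - 1) mod m = i"
proof (cases "Suc i < m")
  case False
  with assms have "Suc i = m" by simp
  then show ?thesis by simp
qed simp

lemma Suc_pred_mod: "i < m \<Longrightarrow> Suc ((i + m - 1) mod m) mod m = i"
  by (cases i) auto

definition isolated_in :: "nat \<Rightarrow> nat \<Rightarrow> nat set \<Rightarrow> bool" where
  "isolated_in m i S \<longleftrightarrow> i \<in> S \<and> S \<noteq> {i} \<and> Suc i mod m \<notin> S \<and> (i + m - 1) mod m \<notin> S"

definition first_gap :: "nat \<Rightarrow> nat set \<Rightarrow> nat \<Rightarrow> nat" where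
  "first_gap m S i = (LEAST d. 0 < d \<and> (i + d) mod m \<in> S)"

lemma first_gap:
  assumes "S \<subseteq> {0..<m}" "i < m" "w \<in> S" "w \<noteq> i"
  shows "0 < first_gap m S i" "first_gap m S i < m" "(i + first_gap m S i) mod m \<in> S"
proof -
  let ?P = "\<lambda>d. 0 < d \<and> (i + d) mod m \<in> S"
  have "w < m" using assms(1,3) by auto
  then have P: "?P (cdist m i w)" and "cdist m i w < m"
    using assms(2-4) cdist_inj[of i m w i] cdist_less add_cdist_mod by auto
  have "?P (first_gap m S i)" unfolding first_gap_def using P by (rule LeastI)
  moreover have "first_gap m S i \<le> cdist m i w" unfolding first_gap_def using P by (rule Least_le)
  ultimately
  show "0 < first_gap m S i" "first_gap m S i < m" "(i + first_gap m S i) mod m \<in> S"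
    using \<open>cdist m i w < m\<close> by simp_all
qed

lemma before_first_gap: "0 < d \<Longrightarrow> d < first_gap m S i \<Longrightarrow> (i + d) mod m \<notin> S"
  unfolding first_gap_def using not_less_Least by blast

lemma axax_pair_of_adjacent_isolated:
  assumes "S \<subseteq> {0..<m}" "T \<subseteq> {0..<m}" "i < m"
    and "isolated_in m i S" "isolated_in m (Suc i mod m) T"
    and "first_gap m S i \<le> first_gap m T (Suc i mod m)"
  shows "axax_pair m S T"
proof -
  define j d0 d1 where "j = Suc i mod m" and "d0 = first_gap m S i" and "d1 = first_gap m T j"
  have "j < m" "i \<notin> T" using assms(3,5) pred_Suc_mod by (auto simp: j_def isolated_in_def)
  obtain w w' where "w \<in> S" "w \<noteq> i" "w' \<in> T" "w' \<noteq> j"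
    using assms(4,5) unfolding isolated_in_def j_def by blast
  then have d0: "0 < d0" "(i + d0) mod m \<in> S" and d1: "d1 < m" "(j + d1) mod m \<in> T"
    using first_gap[OF assms(1,3)] first_gap[OF assms(2) \<open>j < m\<close>] by (auto simp: d0_def d1_def)
  have "d0 \<noteq> 1" using d0(2) assms(4) by (auto simp: isolated_in_def)
  moreover have "d1 \<noteq> m - 1"
    using d1(2) \<open>i \<notin> T\<close> pred_Suc_mod[OF assms(3)] \<open>j < m\<close> by (auto simp: j_def)
  ultimately have "1 < d0" "d0 \<le> d1" "Suc d1 < m"
    using d0(1) d1(1) assms(6) by (auto simp: d0_def d1_def j_def)
  txt \<open>The points \<open>i\<close>, \<open>i + 1\<close>, \<open>i + d0\<close>, \<open>i + 1 + d1\<close> alternate between \<open>S - T\<close> and \<open>T\<close>.\<close>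
  have shift: "(j + d) mod m = (Suc i + d) mod m" for d
    by (simp add: j_def mod_add_left_eq)
  have "(j + (d0 - 1)) mod m \<notin> T"
    using before_first_gap[of "d0 - 1" m T j] \<open>1 < d0\<close> \<open>d0 \<le> d1\<close> by (simp add: d1_def)
  then have "(i + d0) mod m \<notin> T"
    using shift[of "d0 - 1"] \<open>1 < d0\<close> by simp
  moreover have "in_cyclic_order m (i mod m) (Suc i mod m) ((i + d0) mod m) ((Suc i + d1) mod m)"
    using \<open>1 < d0\<close> \<open>d0 \<le> d1\<close> \<open>Suc d1 < m\<close> by (intro in_cyclic_order_mod) auto
  ultimately show ?thesis
    using assms(3-5) d0(2) d1(2) \<open>i \<notin> T\<close> shift[of d1]
    unfolding axax_pair_def isolated_in_def j_def by (metis Diff_iff mod_less)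
qed

lemma exists_vertex_with_cyclic_neighbour:
  assumes "0 < m" "\<forall>S\<in>G. S \<subseteq> {0..<m}" "\<forall>S\<in>G. \<forall>T\<in>G. \<not> axax_pair m S T"
  shows "\<exists>i<m. \<forall>S\<in>G. \<not> isolated_in m i S"
proof (rule ccontr)
  assume "\<not> ?thesis"
  then have isolated: "\<exists>S\<in>G. isolated_in m i S" if "i < m" for i
    using that by blast
  let ?P = "\<lambda>(i, S). i < m \<and> S \<in> G \<and> isolated_in m i S" and ?gap = "\<lambda>(i, S). first_gap m S i"
  obtain S0 where "?P (0, S0)" using isolated assms(1) by auto
  then obtain p where "?P p" and minimal: "\<forall>q. ?P q \<longrightarrow> ?gap p \<le> ?gap q"
    using ex_has_least_nat[of ?P "(0, S0)" ?gap] by blast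
  then obtain i S where "p = (i, S)" "i < m" "S \<in> G" "isolated_in m i S" by (cases p) auto
  moreover obtain T where "T \<in> G" "isolated_in m (Suc i mod m) T"
    using isolated[of "Suc i mod m"] assms(1) by auto
  moreover have "first_gap m S i \<le> first_gap m T (Suc i mod m)"
    using minimal[rule_format, of "(Suc i mod m, T)"] calculation assms(1) by simp
  ultimately have "axax_pair m S T"
    using assms(2) by (intro axax_pair_of_adjacent_isolated) auto
  with \<open>S \<in> G\<close> \<open>T \<in> G\<close> assms(3) show False by blast
qed

section \<open>Outerplanar graphs on a linearly ordered vertex set\<close>

definition strict_linorder_on :: "('a \<Rightarrow> 'a \<Rightarrow> bool) \<Rightarrow> 'a set \<Rightarrow> bool" where
  "strict_linorder_on lt V \<longleftrightarrow> (\<forall>x\<in>V. \<not> lt x x)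
     \<and> (\<forall>x\<in>V. \<forall>y\<in>V. \<forall>z\<in>V. lt x y \<longrightarrow> lt y z \<longrightarrow> lt x z)
     \<and> (\<forall>x\<in>V. \<forall>y\<in>V. x \<noteq> y \<longrightarrow> lt x y \<or> lt y x)"

definition cycle_edges :: "('a \<Rightarrow> 'a \<Rightarrow> bool) \<Rightarrow> 'a set \<Rightarrow> 'a set set" where
  "cycle_edges lt V = {{A, B} | A B. A \<in> V \<and> B \<in> V \<and> lt A B \<and>
      ((\<not> (\<exists>X\<in>V. lt A X \<and> lt X B)) \<or> (\<forall>X\<in>V. \<not> lt X A \<and> \<not> lt B X))}"

definition crossing :: "('a \<Rightarrow> 'a \<Rightarrow> bool) \<Rightarrow> 'a set \<Rightarrow> 'a set \<Rightarrow> bool" where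
  "crossing lt e f \<longleftrightarrow> (\<exists>A B C D. e = {A, B} \<and> f = {C, D} \<and> lt A C \<and> lt C B \<and> lt B D)"

text \<open>The axax-condition for the cyclic order induced by \<open>lt\<close>: up to exchanging \<open>a1\<close> with
  \<open>a2\<close> and \<open>x1\<close> with \<open>x2\<close>, every rotation of \<open>a1 x1 a2 x2\<close> has the form below.\<close>
definition interleave_free :: "('a \<Rightarrow> 'a \<Rightarrow> bool) \<Rightarrow> 'a set set \<Rightarrow> bool" where
  "interleave_free lt F \<longleftrightarrow> (\<forall>S\<in>F. \<forall>T\<in>F. \<not> (\<exists>a1\<in>S - T. \<exists>a2\<in>S - T. \<exists>x1\<in>T. \<exists>x2\<in>T.
      lt a1 x1 \<and> lt x1 a2 \<and> (lt x2 a1 \<or> lt a2 x2)))"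

definition rank :: "('a \<Rightarrow> 'a \<Rightarrow> bool) \<Rightarrow> 'a set \<Rightarrow> 'a \<Rightarrow> nat" where
  "rank lt V x = card {y\<in>V. lt y x}"

lemma strict_linorder_on_subset: "strict_linorder_on lt V \<Longrightarrow> W \<subseteq> V \<Longrightarrow> strict_linorder_on lt W"
  unfolding strict_linorder_on_def by blast

lemma cycle_edge_not_crossing:
  assumes lin: "strict_linorder_on lt V" and e: "e \<in> cycle_edges lt V" and "C \<in> V" "D \<in> V"
  shows "\<not> crossing lt e {C, D}" "\<not> crossing lt {C, D} e"
proof -
  obtain A B where AB: "e = {A, B}" "A \<in> V" "B \<in> V" "lt A B"
    "(\<not> (\<exists>X\<in>V. lt A X \<and> lt X B)) \<or> (\<forall>X\<in>V. \<not> lt X A \<and> \<not> lt B X)"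
    using e unfolding cycle_edges_def by blast
  have irrefl: "\<And>x. x \<in> V \<Longrightarrow> \<not> lt x x"
    and trans: "\<And>x y z. x \<in> V \<Longrightarrow> y \<in> V \<Longrightarrow> z \<in> V \<Longrightarrow> lt x y \<Longrightarrow> lt y z \<Longrightarrow> lt x z"
    using lin unfolding strict_linorder_on_def by blast+
  have oriented: "A' = A \<and> B' = B" if "{A', B'} = e" "lt A' B'" for A' B'
  proof -
    have "A' = A \<and> B' = B \<or> A' = B \<and> B' = A" using that(1) AB(1) by (simp add: doubleton_eq_iff)
    then show ?thesis using that(2) AB(2-4) irrefl trans by blast
  qed
  show "\<not> crossing lt e {C, D}"
  proof
    assume "crossing lt e {C, D}"
    then obtain A' B' C' D' where h: "e = {A', B'}" "{C, D} = {C', D'}" "lt A' C'" "lt C' B'" "lt B' D'"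
      unfolding crossing_def by blast
    have "A' \<in> V" "B' \<in> V" "C' \<in> V" "D' \<in> V"
      using h(1,2) AB(1-3) \<open>C \<in> V\<close> \<open>D \<in> V\<close> by (auto simp: doubleton_eq_iff)
    then have "A' = A \<and> B' = B" using oriented h trans by metis
    then show False using AB(5) h \<open>C' \<in> V\<close> \<open>D' \<in> V\<close> by blast
  qed
  show "\<not> crossing lt {C, D} e"
  proof
    assume "crossing lt {C, D} e"
    then obtain A' B' C' D' where h: "{C, D} = {A', B'}" "e = {C', D'}" "lt A' C'" "lt C' B'" "lt B' D'"
      unfolding crossing_def by blast
    have "A' \<in> V" "B' \<in> V" "C' \<in> V" "D' \<in> V"
      using h(1,2) AB(1-3) \<open>C \<in> V\<close> \<open>D \<in> V\<close> by (auto simp: doubleton_eq_iff)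
    then have "C' = A \<and> D' = B" using oriented h trans by metis
    then show False using AB(5) h \<open>A' \<in> V\<close> \<open>B' \<in> V\<close> by blast
  qed
qed

context
  fixes lt :: "'a \<Rightarrow> 'a \<Rightarrow> bool" and V :: "'a set"
  assumes fin: "finite V" and lin: "strict_linorder_on lt V"
begin

lemma rank_less_rank:
  assumes "x \<in> V" "y \<in> V" "lt x y"
  shows "rank lt V x < rank lt V y"
proof -
  have "{z\<in>V. lt z x} \<subset> {z\<in>V. lt z y}"
    using assms lin unfolding strict_linorder_on_def by blast
  then show ?thesis unfolding rank_def using fin by (simp add: psubset_card_mono)
qed

lemma rank_less_card:
  assumes "x \<in> V"
  shows "rank lt V x < card V"
proof -
  have "{z\<in>V. lt z x} \<subset> V"
    using assms lin unfolding strict_linorder_on_def by blast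
  then show ?thesis unfolding rank_def using fin by (simp add: psubset_card_mono)
qed

lemma rank_less_rank_iff:
  assumes "x \<in> V" "y \<in> V"
  shows "rank lt V x < rank lt V y \<longleftrightarrow> lt x y"
proof
  assume "rank lt V x < rank lt V y"
  then have "x \<noteq> y" "\<not> lt y x" using rank_less_rank[OF assms(2,1)] by auto
  then show "lt x y" using lin assms unfolding strict_linorder_on_def by blast
qed (rule rank_less_rank[OF assms])

lemma inj_on_rank: "inj_on (rank lt V) V"
proof (rule inj_onI)
  fix x y assume "x \<in> V" "y \<in> V" "rank lt V x = rank lt V y"
  then show "x = y" using lin rank_less_rank unfolding strict_linorder_on_def by (metis less_irrefl)
qed

lemma rank_image: "rank lt V ` V = {0..<card V}"
proof (rule card_subset_eq)
  show "rank lt V ` V \<subseteq> {0..<card V}" using rank_less_card by auto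
  show "card (rank lt V ` V) = card {0..<card V}" by (simp add: card_image[OF inj_on_rank])
qed simp

lemma cycle_edge_if_rank_Suc_mod:
  assumes "x \<in> V" "y \<in> V" "2 \<le> card V" "rank lt V y = Suc (rank lt V x) mod card V"
  shows "{x, y} \<in> cycle_edges lt V"
proof (cases "Suc (rank lt V x) < card V")
  case True
  then have ry: "rank lt V y = Suc (rank lt V x)" using assms(4) by simp
  then have "lt x y" using rank_less_rank_iff[OF assms(1,2)] by simp
  moreover have "\<not> (\<exists>z\<in>V. lt x z \<and> lt z y)"
    using ry rank_less_rank_iff[OF assms(1)] rank_less_rank_iff[OF _ assms(2)] by fastforce
  ultimately show ?thesis using assms(1,2) unfolding cycle_edges_def by blast
next
  case False
  then have rx: "Suc (rank lt V x) = card V" using rank_less_card[OF assms(1)] by simp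
  then have ry: "rank lt V y = 0" using assms(4) by simp
  have "lt y x" using rank_less_rank_iff[OF assms(2,1)] ry rx assms(3) by simp
  moreover have "\<forall>z\<in>V. \<not> lt z y \<and> \<not> lt x z"
    using rank_less_rank_iff[OF _ assms(2)] rank_less_rank_iff[OF assms(1)] rank_less_card ry rx
    by fastforce
  ultimately have "{y, x} \<in> cycle_edges lt V" using assms(1,2) unfolding cycle_edges_def by blast
  then show ?thesis by (simp add: insert_commute)
qed

lemma no_axax_pair_rank_image:
  assumes "interleave_free lt F" "S \<in> F" "T \<in> F" "S \<subseteq> V" "T \<subseteq> V"
  shows "\<not> axax_pair (card V) (rank lt V ` S) (rank lt V ` T)"
proof
  assume "axax_pair (card V) (rank lt V ` S) (rank lt V ` T)"
  then obtain a1 x1 a2 x2 where a: "a1 \<in> S - T" "a2 \<in> S - T" and x: "x1 \<in> T" "x2 \<in> T"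
    and "in_cyclic_order (card V) (rank lt V a1) (rank lt V x1) (rank lt V a2) (rank lt V x2)"
    unfolding axax_pair_def by blast
  then have "lt a1 x1 \<and> lt x1 a2 \<and> lt a2 x2 \<or> lt x1 a2 \<and> lt a2 x2 \<and> lt x2 a1 \<or>
      lt a2 x2 \<and> lt x2 a1 \<and> lt a1 x1 \<or> lt x2 a1 \<and> lt a1 x1 \<and> lt x1 a2"
    using in_cyclic_order_cases rank_less_rank_iff assms(4,5) by (metis Diff_iff subsetD)
  then show False using assms(1-3) a x unfolding interleave_free_def by blast
qed

lemma cycle_edge_if_ranks_adjacent:
  assumes "x \<in> V" "y \<in> V" "2 \<le> card V"
    and "rank lt V y = Suc (rank lt V x) mod card V \<or> rank lt V x = Suc (rank lt V y) mod card V"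
  shows "x \<noteq> y" "{x, y} \<in> cycle_edges lt V"
  using assms cycle_edge_if_rank_Suc_mod[of x y] cycle_edge_if_rank_Suc_mod[of y x]
    Suc_mod_neq[OF rank_less_card[OF assms(1)] assms(3)]
  by (auto simp: insert_commute)

lemma exists_vertex_joined_by_cycle_edge:
  assumes "V \<noteq> {}" "\<forall>S\<in>F. S \<subseteq> V" "interleave_free lt F"
  shows "\<exists>v\<in>V. \<forall>S\<in>F. v \<in> S \<longrightarrow> S = {v} \<or> (\<exists>u\<in>S. u \<noteq> v \<and> {u, v} \<in> cycle_edges lt V)"
proof -
  let ?r = "rank lt V" and ?m = "card V"
  have "0 < ?m" using fin assms(1) by (simp add: card_gt_0_iff)
  moreover have "\<forall>S'\<in>(image ?r) ` F. S' \<subseteq> {0..<?m}" using assms(2) rank_image by blast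
  moreover have "\<forall>S'\<in>(image ?r) ` F. \<forall>T'\<in>(image ?r) ` F. \<not> axax_pair ?m S' T'"
    using no_axax_pair_rank_image assms(2,3) by blast
  ultimately have "\<exists>i<?m. \<forall>S'\<in>(image ?r) ` F. \<not> isolated_in ?m i S'"
    by (rule exists_vertex_with_cyclic_neighbour)
  then obtain i where "i < ?m" and i: "\<forall>S'\<in>(image ?r) ` F. \<not> isolated_in ?m i S'"
    by blast
  have "i \<in> ?r ` V" using \<open>i < ?m\<close> by (simp add: rank_image)
  then obtain v where v: "v \<in> V" "?r v = i" by blast
  have "\<exists>u\<in>S. u \<noteq> v \<and> {u, v} \<in> cycle_edges lt V" if S: "S \<in> F" "v \<in> S" "S \<noteq> {v}" for S
  proof -
    have "S \<subseteq> V" using S(1) assms(2) by blast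
    obtain w where "w \<in> S" "w \<noteq> v" using S(2,3) by blast
    have "2 \<le> ?m"
      using card_mono[OF fin, of "{v, w}"] \<open>S \<subseteq> V\<close> S(2) \<open>w \<in> S\<close> \<open>w \<noteq> v\<close>
      by (auto simp: numeral_2_eq_2)
    have "?r ` S \<noteq> {i}"
      using inj_on_image_eq_iff[OF inj_on_rank \<open>S \<subseteq> V\<close>, of "{v}"] v S(3) by simp
    moreover have "\<not> isolated_in ?m i (?r ` S)" using i S(1) by blast
    ultimately have "Suc i mod ?m \<in> ?r ` S \<or> (i + ?m - 1) mod ?m \<in> ?r ` S"
      using S(2) v(2) unfolding isolated_in_def by blast
    then obtain u where "u \<in> S" "?r u = Suc (?r v) mod ?m \<or> ?r v = Suc (?r u) mod ?m"
      using v(2) Suc_pred_mod[OF \<open>i < ?m\<close>] by (metis imageE)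
    then show ?thesis
      using cycle_edge_if_ranks_adjacent[of u v] \<open>S \<subseteq> V\<close> v(1) \<open>2 \<le> ?m\<close> by blast
  qed
  with v(1) show ?thesis by (intro bexI[of _ v]) auto
qed

end

lemma simple_graph_on_cycle_edges:
  "strict_linorder_on lt V \<Longrightarrow> simple_graph_on V (cycle_edges lt V)"
  unfolding simple_graph_on_def cycle_edges_def strict_linorder_on_def by blast

lemma noncrossing_Un_cycle_edges:
  assumes lin: "strict_linorder_on lt V" and graph: "simple_graph_on V (E \<union> cycle_edges lt V)"
    and noncrossing: "\<forall>e\<in>E. \<forall>f\<in>E. \<not> crossing lt e f"
  shows "\<forall>e\<in>E \<union> cycle_edges lt V. \<forall>f\<in>E \<union> cycle_edges lt V. \<not> crossing lt e f"
proof (intro ballI)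
  fix e f assume e: "e \<in> E \<union> cycle_edges lt V" and f: "f \<in> E \<union> cycle_edges lt V"
  show "\<not> crossing lt e f"
  proof (cases "e \<in> cycle_edges lt V \<or> f \<in> cycle_edges lt V")
    case True
    obtain A B C D where "e = {A, B}" "f = {C, D}" "A \<in> V" "B \<in> V" "C \<in> V" "D \<in> V"
      using graph e f unfolding simple_graph_on_def by metis
    then show ?thesis using True cycle_edge_not_crossing[OF lin] by blast
  next
    case False
    then show ?thesis using noncrossing e f by blast
  qed
qed

lemma induces_connected_insert:
  assumes conn: "induces_connected E' (S - {v})" and "E' \<subseteq> E"
    and edge: "v \<in> S \<Longrightarrow> S \<noteq> {v} \<Longrightarrow> \<exists>u\<in>S. u \<noteq> v \<and> {u, v} \<in> E"
  shows "induces_connected E S"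
proof -
  let ?R = "\<lambda>x y. x \<in> S \<and> y \<in> S \<and> {x, y} \<in> E"
  have "(\<lambda>x y. x \<in> S - {v} \<and> y \<in> S - {v} \<and> {x, y} \<in> E') \<le> ?R"
    using \<open>E' \<subseteq> E\<close> by auto
  then have path: "?R\<^sup>*\<^sup>* a b" if "a \<in> S - {v}" "b \<in> S - {v}" for a b
    using conn that rtranclp_mono unfolding induces_connected_def by blast
  show ?thesis
  proof (cases "v \<in> S \<and> S \<noteq> {v}")
    case True
    then obtain u where u: "u \<in> S" "u \<noteq> v" "{u, v} \<in> E" using edge by blast
    then have "?R u v" "?R v u" using True by (auto simp: insert_commute)
    then have "?R\<^sup>*\<^sup>* a u \<and> ?R\<^sup>*\<^sup>* u a" if "a \<in> S" for a
      using path[of a u] path[of u a] that u by (cases "a = v") auto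
    then show ?thesis unfolding induces_connected_def by (meson rtranclp_trans)
  next
    case False
    then show ?thesis using path unfolding induces_connected_def by auto
  qed
qed

lemma interleave_free_image_Diff:
  "interleave_free lt F \<Longrightarrow> interleave_free lt ((\<lambda>S. S - A) ` F)"
  unfolding interleave_free_def by blast

text \<open>\<open>E\<close> contains the cycle through \<open>V\<close> in \<open>lt\<close>-order and no two of its edges cross as chords of
  that cycle; this is an outerplanar embedding with the cycle bounding the outer face.\<close>
definition outerplanar_connecting ::
    "('a \<Rightarrow> 'a \<Rightarrow> bool) \<Rightarrow> 'a set \<Rightarrow> 'a set set \<Rightarrow> 'a set set \<Rightarrow> bool" where
  "outerplanar_connecting lt V F E \<longleftrightarrow> simple_graph_on V E \<and> cycle_edges lt V \<subseteq> E
     \<and> (\<forall>e\<in>E. \<forall>f\<in>E. \<not> crossing lt e f) \<and> (\<forall>S\<in>F. induces_connected E S)"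

lemma outerplanar_connecting_insert:
  assumes lin: "strict_linorder_on lt V"
    and E': "outerplanar_connecting lt (V - {v}) ((\<lambda>S. S - {v}) ` F) E'"
    and v: "\<forall>S\<in>F. v \<in> S \<longrightarrow> S = {v} \<or> (\<exists>u\<in>S. u \<noteq> v \<and> {u, v} \<in> cycle_edges lt V)"
  shows "outerplanar_connecting lt V F (E' \<union> cycle_edges lt V)"
proof -
  let ?E = "E' \<union> cycle_edges lt V"
  have "simple_graph_on V ?E"
    using E' simple_graph_on_cycle_edges[OF lin]
    unfolding outerplanar_connecting_def simple_graph_on_def by (metis Diff_iff Un_iff)
  moreover have "\<forall>e\<in>?E. \<forall>f\<in>?E. \<not> crossing lt e f"
    using noncrossing_Un_cycle_edges[OF lin] calculation E' by (simp add: outerplanar_connecting_def)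
  moreover have "induces_connected ?E S" if "S \<in> F" for S
  proof (rule induces_connected_insert)
    show "induces_connected E' (S - {v})"
      using E' that unfolding outerplanar_connecting_def by blast
    show "\<exists>u\<in>S. u \<noteq> v \<and> {u, v} \<in> ?E" if "v \<in> S" "S \<noteq> {v}"
      using v \<open>S \<in> F\<close> that by blast
  qed simp
  ultimately show ?thesis unfolding outerplanar_connecting_def by blast
qed

theorem exists_outerplanar_connecting:
  assumes "finite V" "strict_linorder_on lt V" "\<forall>S\<in>F. S \<subseteq> V" "interleave_free lt F"
  shows "\<exists>E. outerplanar_connecting lt V F E"
  using assms
proof (induction "card V" arbitrary: V F rule: less_induct)
  case less
  show ?case
  proof (cases "V = {}")
    case True
    then have "outerplanar_connecting lt V F {}"
      using less.prems(3) unfolding outerplanar_connecting_def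
      by (simp add: simple_graph_on_def cycle_edges_def induces_connected_def, blast)
    then show ?thesis ..
  next
    case False
    obtain v where "v \<in> V"
      and v: "\<forall>S\<in>F. v \<in> S \<longrightarrow> S = {v} \<or> (\<exists>u\<in>S. u \<noteq> v \<and> {u, v} \<in> cycle_edges lt V)"
      using exists_vertex_joined_by_cycle_edge[OF less.prems(1,2) False less.prems(3,4)] by blast
    let ?F' = "(\<lambda>S. S - {v}) ` F"
    have "card (V - {v}) < card V" using less.prems(1) \<open>v \<in> V\<close> by (rule card_Diff1_less)
    moreover have "finite (V - {v})" using less.prems(1) by simp
    moreover have "strict_linorder_on lt (V - {v})"
      using less.prems(2) by (rule strict_linorder_on_subset) blast
    moreover have "\<forall>S\<in>?F'. S \<subseteq> V - {v}" using less.prems(3) by blast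
    moreover have "interleave_free lt ?F'"
      using less.prems(4) by (rule interleave_free_image_Diff)
    ultimately have "\<exists>E'. outerplanar_connecting lt (V - {v}) ?F' E'"
      by (rule less.hyps)
    then show ?thesis using outerplanar_connecting_insert[OF less.prems(2) _ v] by blast
  qed
qed

section \<open>Runs\<close>

lemma arc_len_bound:
  assumes "i < n" "j < n" "arc n i j \<noteq> {0..<n}"
  shows "cdist n i j + 2 \<le> n"
proof (rule ccontr)
  assume "\<not> ?thesis"
  then have "\<forall>v<n. cdist n i v \<le> cdist n i j" using cdist_less[OF assms(1)] by fastforce
  then have "arc n i j = {0..<n}" unfolding arc_def by auto
  with assms(3) show False ..
qed

lemma arc_start_iff:
  assumes "i < n" "j < n" "arc n i j \<noteq> {0..<n}" "x < n"
  shows "x \<in> arc n i j \<and> (x + n - 1) mod n \<notin> arc n i j \<longleftrightarrow> x = i"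
proof (cases "x = i")
  case True
  have "1 < n" using arc_len_bound[OF assms(1-3)] by simp
  then show ?thesis
    using True arc_len_bound[OF assms(1-3)] assms(1) cdist_pred_mod_self[of n i]
    by (simp add: arc_def)
next
  case False
  then show ?thesis using assms(1,4) cdist_pred_mod[OF assms(1,4) False] by (auto simp: arc_def)
qed

lemma arc_end_iff:
  assumes "i < n" "j < n" "arc n i j \<noteq> {0..<n}" "x < n"
  shows "x \<in> arc n i j \<and> Suc x mod n \<notin> arc n i j \<longleftrightarrow> x = j"
  using arc_len_bound[OF assms(1-3)] assms(1,2,4) cdist_inj[OF assms(1,2,4)]
  by (auto simp: arc_def cdist_Suc_mod)

lemma run_s_arc:
  assumes "i < n" "j < n" "arc n i j \<noteq> {0..<n}"
  shows "run_s n (arc n i j) = i"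
  unfolding run_s_def
proof (rule the_equality)
  fix i' assume "i' < n \<and> (\<exists>j'<n. arc n i j = arc n i' j')"
  then obtain j' where "i' < n" "j' < n" "arc n i j = arc n i' j'" by blast
  then show "i' = i"
    using arc_start_iff[OF assms, of i'] arc_start_iff[of i' n j' i'] assms(3) by simp
qed (use assms in blast)

lemma run_t_arc:
  assumes "i < n" "j < n" "arc n i j \<noteq> {0..<n}"
  shows "run_t n (arc n i j) = j"
  unfolding run_t_def
proof (rule the_equality)
  fix j' assume "j' < n \<and> (\<exists>i'<n. arc n i j = arc n i' j')"
  then obtain i' where "i' < n" "j' < n" "arc n i j = arc n i' j'" by blast
  then show "j' = j"
    using arc_end_iff[OF assms, of j'] arc_end_iff[of i' n j' j'] assms(3) by simp
qed (use assms in blast)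

definition run_len :: "nat \<Rightarrow> nat set \<Rightarrow> nat" where
  "run_len n R = cdist n (run_s n R) (run_t n R)"

lemma is_runE:
  assumes "is_run n R"
  obtains i j where "i < n" "j < n" "R = arc n i j" "run_s n R = i" "run_t n R = j"
    "run_len n R + 2 \<le> n"
proof -
  obtain i j where ij: "i < n" "j < n" "R = arc n i j" "R \<noteq> {0..<n}"
    using assms unfolding is_run_def by blast
  then show ?thesis
    using that run_s_arc run_t_arc arc_len_bound by (simp add: run_len_def)
qed

lemma run_s_less: "is_run n R \<Longrightarrow> run_s n R < n"
  by (erule is_runE) simp

lemma run_len_bound: "is_run n R \<Longrightarrow> run_len n R + 2 \<le> n"
  by (erule is_runE)

lemma run_t_eq: "is_run n R \<Longrightarrow> run_t n R = (run_s n R + run_len n R) mod n"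
  by (erule is_runE) (simp add: run_len_def add_cdist_mod)

lemma mem_run_iff: "is_run n R \<Longrightarrow> v \<in> R \<longleftrightarrow> v < n \<and> cdist n (run_s n R) v \<le> run_len n R"
  by (erule is_runE) (simp add: arc_def run_len_def)

lemma run_eqI:
  "is_run n R \<Longrightarrow> is_run n R' \<Longrightarrow> run_s n R = run_s n R' \<Longrightarrow> run_len n R = run_len n R' \<Longrightarrow> R = R'"
  by (auto simp: mem_run_iff)

lemma mod_in_run:
  assumes "is_run n R" "run_s n R \<le> u" "u \<le> run_s n R + run_len n R"
  shows "u mod n \<in> R"
proof -
  have "cdist n (run_s n R mod n) (u mod n) = u - run_s n R"
    using assms run_len_bound[OF assms(1)] by (intro cdist_mod_mod) auto
  then show ?thesis
    using assms run_s_less[OF assms(1)] run_len_bound[OF assms(1)] by (simp add: mem_run_iff)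
qed

lemma mod_notin_run:
  "is_run n R \<Longrightarrow> run_s n R \<le> u \<Longrightarrow> u mod n \<notin> R \<Longrightarrow> run_s n R + run_len n R < u"
  using mod_in_run by fastforce

lemma mem_runE:
  assumes "is_run n R" "v \<in> R"
  obtains u where "run_s n R \<le> u" "u \<le> run_s n R + run_len n R" "u mod n = v"
proof
  show "(run_s n R + cdist n (run_s n R) v) mod n = v"
    using assms by (simp add: mem_run_iff run_s_less add_cdist_mod)
qed (use assms in \<open>auto simp: mem_run_iff\<close>)

lemma meets_runE:
  assumes "is_run n R" "R \<inter> K \<noteq> {}"
  obtains u where "run_s n R \<le> u" "u \<le> run_s n R + run_len n R" "u mod n \<in> R \<inter> K"
proof -
  obtain v where "v \<in> R" "v \<in> K" using assms(2) by blast
  then show thesis using that mem_runE[OF assms(1) \<open>v \<in> R\<close>] by blast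
qed

lemma strictly_contained_if_nested:
  assumes "is_run n Q" "is_run n R" "run_s n Q < run_s n R"
    "run_s n R + run_len n R < run_s n Q + run_len n Q"
  shows "strictly_contained n R Q"
proof -
  have "R \<subseteq> Q"
  proof
    fix v assume "v \<in> R"
    then obtain u where "run_s n R \<le> u" "u \<le> run_s n R + run_len n R" "u mod n = v"
      by (rule mem_runE[OF assms(2)])
    then show "v \<in> Q" using mod_in_run[OF assms(1), of u] assms(3,4) by simp
  qed
  moreover have "cdist n (run_s n Q) (run_s n R) = run_s n R - run_s n Q"
    using assms(3) run_s_less[OF assms(2)] by (simp add: cdist_eq_if)
  moreover have "cdist n (run_s n Q) (run_t n R) = run_s n R + run_len n R - run_s n Q"
    using cdist_mod_mod[of "run_s n Q" "run_s n R + run_len n R" n] assms run_len_bound[OF assms(1)]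
    by (simp add: run_t_eq run_s_less)
  ultimately show ?thesis
    using assms(3,4) by (simp add: strictly_contained_def flip: run_len_def)
qed

text \<open>Here \<open>R\<close> runs past vertex \<open>n - 1\<close> and covers the copy of \<open>P\<close> shifted by \<open>n\<close>.\<close>
lemma strictly_contained_if_wrapped:
  assumes "is_run n P" "is_run n R" "run_s n P \<le> run_s n R"
    "run_s n P + run_len n P + n < run_s n R + run_len n R"
  shows "strictly_contained n P R"
proof -
  have "run_s n P < run_s n R" using assms(3,4) run_len_bound[OF assms(1)] run_len_bound[OF assms(2)]
    by (cases "run_s n P = run_s n R") auto
  have "P \<subseteq> R"
  proof
    fix v assume "v \<in> P"
    then obtain u where "run_s n P \<le> u" "u \<le> run_s n P + run_len n P" "u mod n = v"
      by (rule mem_runE[OF assms(1)])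
    then show "v \<in> R"
      using mod_in_run[OF assms(2), of "u + n"] assms(4) run_s_less[OF assms(2)] by simp
  qed
  moreover have "cdist n (run_s n R) (run_s n P) = run_s n P + n - run_s n R"
    using \<open>run_s n P < run_s n R\<close> run_s_less[OF assms(2)] by (simp add: cdist_eq_if)
  moreover have "cdist n (run_s n R) (run_t n P) = run_s n P + run_len n P + n - run_s n R"
    using cdist_mod_mod[of "run_s n R" "run_s n P + run_len n P + n" n] assms(4)
      run_len_bound[OF assms(2)] run_s_less[OF assms(2)]
    by (simp add: run_t_eq[OF assms(1)])
  ultimately show ?thesis
    using \<open>run_s n P < run_s n R\<close> assms(4) run_s_less[OF assms(2)]
    by (simp add: strictly_contained_def flip: run_len_def)
qed

lemma lex_less_iff:
  "lex_less n A B \<longleftrightarrow> run_s n A < run_s n B \<or> run_s n A = run_s n B \<and> run_len n A < run_len n B"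
  unfolding lex_less_def run_len_def ..

lemma lex_less_trans: "lex_less n A B \<Longrightarrow> lex_less n B C \<Longrightarrow> lex_less n A C"
  unfolding lex_less_iff by auto

lemma lift_before_later_run:
  assumes "is_run n X" "is_run n Y" "lex_less n X Y" "\<not> strictly_contained n Y X"
    "u \<le> run_s n X + run_len n X" "u mod n \<notin> Y"
  shows "u < run_s n Y"
proof (rule ccontr)
  assume "\<not> u < run_s n Y"
  then have "run_s n Y + run_len n Y < run_s n X + run_len n X"
    using mod_notin_run[OF assms(2) _ assms(6)] assms(5) by simp
  then show False
    using assms(3,4) strictly_contained_if_nested[OF assms(1,2)] by (auto simp: lex_less_iff)
qed

lemma lift_before_wrap:
  assumes "is_run n X" "is_run n Y" "lex_less n X Y" "\<not> strictly_contained n X Y"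
    "u \<le> run_s n Y + run_len n Y" "u mod n \<notin> X"
  shows "u < run_s n X + n"
proof (rule ccontr)
  assume "\<not> u < run_s n X + n"
  then have "(u - n) mod n \<notin> X" "run_s n X \<le> u - n"
    using assms(6) by (simp_all add: le_mod_geq)
  then have "run_s n X + run_len n X + n < run_s n Y + run_len n Y"
    using mod_notin_run[OF assms(1)] assms(5) by fastforce
  then show False
    using assms(3,4) strictly_contained_if_wrapped[OF assms(1,2)] by (auto simp: lex_less_iff)
qed

lemma axax_pair_of_interleaved_runs:
  assumes runs: "is_run n A1" "is_run n A2" "is_run n X1" "is_run n X2"
    and not_contained: "\<not> strictly_contained n A2 X1" "\<not> strictly_contained n A1 X2"
    and order: "lex_less n A1 X1" "lex_less n X1 A2" "lex_less n X2 A1 \<or> lex_less n A2 X2"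
    and hit: "A1 \<inter> K1 \<noteq> {}" "A2 \<inter> K1 \<noteq> {}" "X1 \<inter> K2 \<noteq> {}" "X2 \<inter> K2 \<noteq> {}"
    and miss: "A1 \<inter> K2 = {}" "A2 \<inter> K2 = {}"
  shows "axax_pair n K1 K2"
proof -
  obtain u1 where u1: "run_s n A1 \<le> u1" "u1 \<le> run_s n A1 + run_len n A1" "u1 mod n \<in> A1 \<inter> K1"
    using meets_runE[OF runs(1) hit(1)] .
  obtain u2 where u2: "run_s n A2 \<le> u2" "u2 \<le> run_s n A2 + run_len n A2" "u2 mod n \<in> A2 \<inter> K1"
    using meets_runE[OF runs(2) hit(2)] .
  obtain v1 where v1: "run_s n X1 \<le> v1" "v1 \<le> run_s n X1 + run_len n X1" "v1 mod n \<in> X1 \<inter> K2"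
    using meets_runE[OF runs(3) hit(3)] .
  obtain v2 where v2: "run_s n X2 \<le> v2" "v2 \<le> run_s n X2 + run_len n X2" "v2 mod n \<in> X2 \<inter> K2"
    using meets_runE[OF runs(4) hit(4)] .
  have z_miss: "v1 mod n \<notin> A1" "v1 mod n \<notin> A2" "v2 mod n \<notin> A1" "v2 mod n \<notin> A2"
    and in_K1: "u1 mod n \<in> K1 - K2" "u2 mod n \<in> K1 - K2"
    using miss u1(3) u2(3) v1(3) v2(3) by auto
  have "run_s n A1 \<le> run_s n X1" "run_s n X1 \<le> run_s n A2"
    using order(1,2) by (auto simp: lex_less_iff)
  then have "u1 < v1" "v1 < u2"
    using mod_notin_run[OF runs(1), of v1] lift_before_later_run[OF runs(3,2) order(2)]
      u1 u2 v1 z_miss not_contained(1) by fastforce+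
  txt \<open>On the unrolled line \<open>u1 < v1 < u2 < v2' < u1 + n\<close>, where \<open>v2'\<close> is \<open>v2\<close> or \<open>v2 + n\<close>.\<close>
  from order(3) show ?thesis
  proof
    assume "lex_less n X2 A1"
    then have "v2 < u1" "u2 < v2 + n"
      using lift_before_later_run[OF runs(4,1)] mod_notin_run[OF runs(2), of "v2 + n"]
        run_s_less[OF runs(2)] u1 u2 v2 z_miss not_contained(2) by fastforce+
    then have "in_cyclic_order n (u1 mod n) (v1 mod n) (u2 mod n) ((v2 + n) mod n)"
      using \<open>u1 < v1\<close> \<open>v1 < u2\<close> by (intro in_cyclic_order_mod) auto
    then show ?thesis using in_K1 v1(3) v2(3) unfolding axax_pair_def by auto
  next
    assume "lex_less n A2 X2"
    then have "run_s n A2 \<le> run_s n X2" by (auto simp: lex_less_iff)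
    then have "u2 < v2" "v2 < u1 + n"
      using mod_notin_run[OF runs(2), of v2] lift_before_wrap[OF runs(1,4)]
        lex_less_trans[OF lex_less_trans[OF order(1,2)] \<open>lex_less n A2 X2\<close>]
        u1 u2 v2 z_miss not_contained(2) by fastforce+
    then have "in_cyclic_order n (u1 mod n) (v1 mod n) (u2 mod n) (v2 mod n)"
      using \<open>u1 < v1\<close> \<open>v1 < u2\<close> by (intro in_cyclic_order_mod) auto
    then show ?thesis using in_K1 v1(3) v2(3) unfolding axax_pair_def by blast
  qed
qed

lemma strict_linorder_on_lex_less:
  assumes "\<forall>R\<in>\<H>. is_run n R"
  shows "strict_linorder_on (lex_less n) \<H>"
  unfolding strict_linorder_on_def
proof (intro conjI ballI impI)
  fix x y assume "x \<in> \<H>" "y \<in> \<H>" "x \<noteq> y"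
  then show "lex_less n x y \<or> lex_less n y x"
    using assms run_eqI[of n x y] unfolding lex_less_iff by (meson linorder_neqE_nat)
qed (auto simp: lex_less_iff)

lemma lex_cycle_edges_eq: "lex_cycle_edges n H = cycle_edges (lex_less n) H"
  unfolding lex_cycle_edges_def cycle_edges_def ..

lemma edges_cross_eq: "edges_cross n e f = crossing (lex_less n) e f"
  unfolding edges_cross_def crossing_def ..

lemma interleave_free_hit_sets:
  assumes "\<forall>R\<in>\<H>. is_run n R" "strict_containment_free n \<H>" "axax_free n \<K>"
  shows "interleave_free (lex_less n) ((\<lambda>K. {H\<in>\<H>. H \<inter> K \<noteq> {}}) ` \<K>)"
  unfolding interleave_free_def
proof (intro ballI notI)
  fix S T assume "S \<in> (\<lambda>K. {H\<in>\<H>. H \<inter> K \<noteq> {}}) ` \<K>" "T \<in> (\<lambda>K. {H\<in>\<H>. H \<inter> K \<noteq> {}}) ` \<K>"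
  then obtain K1 K2 where K: "K1 \<in> \<K>" "K2 \<in> \<K>"
    and S: "S = {H\<in>\<H>. H \<inter> K1 \<noteq> {}}" and T: "T = {H\<in>\<H>. H \<inter> K2 \<noteq> {}}" by blast
  assume "\<exists>a1\<in>S - T. \<exists>a2\<in>S - T. \<exists>x1\<in>T. \<exists>x2\<in>T.
    lex_less n a1 x1 \<and> lex_less n x1 a2 \<and> (lex_less n x2 a1 \<or> lex_less n a2 x2)"
  then obtain A1 A2 X1 X2 where "A1 \<in> S - T" "A2 \<in> S - T" "X1 \<in> T" "X2 \<in> T"
    and order: "lex_less n A1 X1" "lex_less n X1 A2" "lex_less n X2 A1 \<or> lex_less n A2 X2"
    by blast
  with S T have "A1 \<in> \<H>" "A2 \<in> \<H>" "X1 \<in> \<H>" "X2 \<in> \<H>"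
    and "A1 \<inter> K1 \<noteq> {}" "A2 \<inter> K1 \<noteq> {}" "X1 \<inter> K2 \<noteq> {}" "X2 \<inter> K2 \<noteq> {}"
    and "A1 \<inter> K2 = {}" "A2 \<inter> K2 = {}" by auto
  moreover from this(1-4) have "\<not> strictly_contained n A2 X1" "\<not> strictly_contained n A1 X2"
    using assms(2) unfolding strict_containment_free_def by blast+
  ultimately have "axax_pair n K1 K2"
    using assms(1) by (intro axax_pair_of_interleaved_runs[OF _ _ _ _ _ _ order]) simp_all
  with K assms(3) show False unfolding axax_free_def by blast
qed

theorem mainTheorem15:
  fixes n :: nat and \<H> :: "nat set set" and \<K> :: "nat set set"
  assumes "3 \<le> n"
    and "finite \<H>" and "3 \<le> card \<H>"
    and "\<forall>R\<in>\<H>. is_run n R"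
    and "strict_containment_free n \<H>"
    and "\<forall>K\<in>\<K>. K \<subseteq> {0..<n}"
    and "axax_free n \<H>" and "axax_free n \<K>"
  shows "\<exists>E :: nat set set set. simple_graph_on \<H> E
           \<and> lex_cycle_edges n \<H> \<subseteq> E
           \<and> (\<forall>e\<in>E. \<forall>f\<in>E. \<not> edges_cross n e f)
           \<and> (\<forall>K\<in>\<K>. induces_connected E {H\<in>\<H>. H \<inter> K \<noteq> {}})"
proof -
  let ?F = "(\<lambda>K. {H\<in>\<H>. H \<inter> K \<noteq> {}}) ` \<K>"
  have "\<exists>E. outerplanar_connecting (lex_less n) \<H> ?F E"
    using strict_linorder_on_lex_less[OF assms(4)] interleave_free_hit_sets[OF assms(4,5,8)]
    by (intro exists_outerplanar_connecting[OF assms(2)]) auto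
  then show ?thesis
    by (simp add: outerplanar_connecting_def lex_cycle_edges_eq edges_cross_eq)
qed

end
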